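(* Let $\mathcal{X}$ be a finite nonempty set of types and $\Phi=(\Phi_{xy})_{x,y\in\mathcal{X}}$ a real matrix with $\Phi_{xy}=\Phi_{yx}$. Let $(n^k)_{k\ge1}$ be a sequence of vectors of nonnegative integers with $N^k=\sum_x n^k_x\to\infty$ and $n^k_x/N^k\to f_x$ for each $x$. Then there exist integer vectors $m^k$ with $0\le m^k_x\le n^k_x$ and stable outcomes $(\mu^k,u^k)$ of the roommate problem with population $m^k$ and surplus $\Phi$ such that: (i) $\bigl(N^k-\sum_x m^k_x\bigr)/N^k\to0$ (the removed subpopulation is asymptotically negligible), and (ii) the average cost per individual of compensating the removed individuals with the payoff of their type tends to zero: $\frac{1}{N^k}\sum_x (n^k_x-m^k_x)u^k_x\to0$.
   Context: Roommate matching with transferable utility for population $m=(m_x)$: $m_x$ individuals of type $x$; a pair of types $\{x,y\}$ (possibly $x=y$) generates surplus $\Phi_{xy}$; singles get $0$. Feasible roommate matchings $\mathcal{P}(m)=\{\mu\in\mathbb{N}^{\mathcal{X}\times\mathcal{X}}:\ \mu_{xy}=\mu_{yx},\ 2\mu_{xx}+\sum_{y\ne x}\mu_{xy}\le m_x\ \forall x\}$; total surplus $S_R(\mu;\Phi)=\sum_x\mu_{xx}\Phi_{xx}+\sum_{x\ne y}\mu_{xy}\Phi_{xy}/2$. An outcome is $(\mu,u)$ with $\mu\in\mathcal{P}(m)$, $u\in\mathbb{R}^{\mathcal{X}}$, $\sum_x m_xu_x=S_R(\mu;\Phi)$; it is stable if $u_x\ge0$ and $u_x+u_y\ge\Phi_{xy}$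 for all $x,y\in\mathcal{X}$. *)

theory Defs
  imports Complex_Main
begin

definition feasible_roommate :: "('x::finite \<Rightarrow> nat) \<Rightarrow> ('x \<Rightarrow> 'x \<Rightarrow> nat) \<Rightarrow> bool" where
  "feasible_roommate m \<mu> \<longleftrightarrow>
     (\<forall>x y. \<mu> x y = \<mu> y x) \<and>
     (\<forall>x. 2 * \<mu> x x + (\<Sum>y\<in>UNIV - {x}. \<mu> x y) \<le> m x)"

definition roommate_surplus :: "('x::finite \<Rightarrow> 'x \<Rightarrow> nat) \<Rightarrow> ('x \<Rightarrow> 'x \<Rightarrow> real) \<Rightarrow> real" where
  "roommate_surplus \<mu> \<Phi> =
     (\<Sum>x\<in>UNIV. real (\<mu> x x) * \<Phi> x x) +
     (\<Sum>p\<in>{(x, y). x \<noteq> y}. real (\<mu> (fst p) (snd p)) * \<Phi> (fst p) (snd p) / 2)"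

definition roommate_outcome ::
  "('x::finite \<Rightarrow> nat) \<Rightarrow> ('x \<Rightarrow> 'x \<Rightarrow> real) \<Rightarrow> ('x \<Rightarrow> 'x \<Rightarrow> nat) \<Rightarrow> ('x \<Rightarrow> real) \<Rightarrow> bool" where
  "roommate_outcome m \<Phi> \<mu> u \<longleftrightarrow>
     feasible_roommate m \<mu> \<and> (\<Sum>x\<in>UNIV. real (m x) * u x) = roommate_surplus \<mu> \<Phi>"

definition stable_roommate_outcome ::
  "('x::finite \<Rightarrow> nat) \<Rightarrow> ('x \<Rightarrow> 'x \<Rightarrow> real) \<Rightarrow> ('x \<Rightarrow> 'x \<Rightarrow> nat) \<Rightarrow> ('x \<Rightarrow> real) \<Rightarrow> bool" where
  "stable_roommate_outcome m \<Phi> \<mu> u \<longleftrightarrow>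
     roommate_outcome m \<Phi> \<mu> u \<and> (\<forall>x. u x \<ge> 0) \<and> (\<forall>x y. u x + u y \<ge> \<Phi> x y)"

end

theory Submission
  imports Defs "HOL-Analysis.Analysis"
begin

(* The fractional relaxation of the roommate problem is a linear program. Minimising the
   dual cost sum_x b_x u_x over stable payoff vectors u and applying Farkas' lemma at the
   minimiser yields, for every population b, a fractional matching (pair masses L and
   singles V) together with stable payoffs u in complementary slackness: only pairs with
   u_x + u_y = Phi_xy form and only types with u_x = 0 stay single. For b = n^k, rounding the
   pair masses down loses fewer than |X| + 1 individuals of each type; removing them from the
   types with positive payoff (types with zero payoff keep everyone, the surplus ones staying
   single at no cost) leaves a population m^k on which the rounded matching and u form a
   stable outcome. As u is bounded by max(0, max Phi), the number of removed individuals and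
   their compensation are O(1) uniformly in k, hence negligible after division by N^k. *)

lemma eventually_nonneg_perturbation:
  fixes s d :: real
  assumes "0 \<le> s" "s = 0 \<Longrightarrow> 0 \<le> d"
  shows "\<forall>\<^sub>F e in at_right 0. 0 \<le> s + e * d"
proof (cases "s = 0")
  case True
  with assms show ?thesis
    by (auto intro: eventually_mono[OF eventually_at_right_less])
next
  case False
  have "((\<lambda>e. s + e * d) \<longlongrightarrow> s + 0 * d) (at_right 0)"
    by (intro tendsto_intros)
  moreover have "0 < s" using False assms(1) by simp
  ultimately show ?thesis
    by (auto dest: order_tendstoD(1) elim!: eventually_mono)
qed

lemma bounded_divide_tendsto_0:
  fixes E N :: "nat \<Rightarrow> real"
  assumes N: "filterlim N at_top sequentially" and E: "\<And>k. \<bar>E k\<bar> \<le> B"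
  shows "(\<lambda>k. E k / N k) \<longlonglongrightarrow> 0"
proof (rule Lim_null_comparison)
  show "(\<lambda>k. B / N k) \<longlonglongrightarrow> 0"
    using N by (intro tendsto_divide_0[OF tendsto_const] filterlim_at_top_imp_at_infinity)
  have "\<forall>\<^sub>F k in sequentially. 0 < N k"
    using N by (simp add: filterlim_at_top_dense)
  then show "\<forall>\<^sub>F k in sequentially. norm (E k / N k) \<le> B / N k"
    by eventually_elim (simp add: E abs_divide divide_right_mono)
qed

lemma farkas_lemma:
  fixes g :: "'i \<Rightarrow> 'a::euclidean_space"
  assumes "finite I"
    and dual: "\<And>a. (\<And>i. i \<in> I \<Longrightarrow> 0 \<le> inner a (g i)) \<Longrightarrow> 0 \<le> inner a b"
  shows "\<exists>c. (\<forall>i\<in>I. 0 \<le> c i) \<and> b = (\<Sum>i\<in>I. c i *\<^sub>R g i)"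
proof -
  define K where "K = {\<Sum>i\<in>I. c i *\<^sub>R g i | c. \<forall>i\<in>I. 0 \<le> c i}"
  have "convex_cone K"
    unfolding convex_cone_iff
  proof (intro conjI ballI allI impI)
    show "0 \<in> K"
      unfolding K_def by (rule CollectI, rule exI[of _ "\<lambda>_. 0"]) simp
  next
    fix v w assume "v \<in> K" "w \<in> K"
    then obtain c d where "\<forall>i\<in>I. 0 \<le> c i" "\<forall>i\<in>I. 0 \<le> d i"
      and "v = (\<Sum>i\<in>I. c i *\<^sub>R g i)" "w = (\<Sum>i\<in>I. d i *\<^sub>R g i)"
      unfolding K_def by blast
    then show "v + w \<in> K"
      unfolding K_def by (intro CollectI exI[of _ "\<lambda>i. c i + d i"])
        (simp add: scaleR_add_left sum.distrib)
  next
    fix v and t :: real assume "v \<in> K" "0 \<le> t"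
    then obtain c where "\<forall>i\<in>I. 0 \<le> c i" "v = (\<Sum>i\<in>I. c i *\<^sub>R g i)"
      unfolding K_def by blast
    with \<open>0 \<le> t\<close> show "t *\<^sub>R v \<in> K"
      unfolding K_def by (intro CollectI exI[of _ "\<lambda>i. t * c i"]) (simp add: scaleR_sum_right)
  qed
  moreover have "g ` I \<subseteq> K"
  proof
    fix v assume "v \<in> g ` I"
    then obtain j where "j \<in> I" "v = g j" by blast
    then show "v \<in> K"
      unfolding K_def using \<open>finite I\<close>
      by (intro CollectI exI[of _ "\<lambda>i. if i = j then 1 else 0"])
        (simp add: sum.delta if_distrib[of "\<lambda>c. c *\<^sub>R _"] cong: if_cong)
  qed
  moreover have "b \<in> convex_cone hull (g ` I)"
  proof (rule ccontr)
    assume "b \<notin> convex_cone hull (g ` I)"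
    moreover have "closed (convex_cone hull (g ` I))"
      using \<open>finite I\<close> by (simp add: closed_convex_cone_hull)
    ultimately obtain a t where sep: "inner a b < t"
      "\<And>z. z \<in> convex_cone hull (g ` I) \<Longrightarrow> t < inner a z"
      using separating_hyperplane_closed_point[OF convex_convex_cone_hull] by blast
    have "t < 0"
      using sep(2)[OF convex_cone_hull_contains_0] by simp
    have "0 \<le> inner a z" if "z \<in> convex_cone hull (g ` I)" for z
    proof (rule ccontr)
      assume "\<not> 0 \<le> inner a z"
      \<comment> \<open>rescaling z by a positive factor would put it on the separating level t\<close>
      then have "inner a ((t / inner a z) *\<^sub>R z) = t" by simp
      moreover have "(t / inner a z) *\<^sub>R z \<in> convex_cone hull (g ` I)"
        using \<open>t < 0\<close> \<open>\<not> 0 \<le> inner a z\<close> that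
        by (intro convex_cone_hull_mul) (auto simp: divide_nonpos_neg)
      ultimately show False using sep(2) by fastforce
    qed
    then have "0 \<le> inner a b"
      by (intro dual) (simp add: hull_inc)
    with sep(1) \<open>t < 0\<close> show False by simp
  qed
  ultimately have "b \<in> K"
    using hull_minimal by blast
  then show ?thesis unfolding K_def by blast
qed

definition roommate_dual_feasible :: "('x \<Rightarrow> 'x \<Rightarrow> real) \<Rightarrow> ('x \<Rightarrow> real) \<Rightarrow> bool" where
  "roommate_dual_feasible \<Phi> u \<longleftrightarrow> (\<forall>x. 0 \<le> u x) \<and> (\<forall>x y. \<Phi> x y \<le> u x + u y)"

lemma roommate_dual_minimum_exists:
  fixes \<Phi> :: "'x::finite \<Rightarrow> 'x \<Rightarrow> real"
  assumes b: "\<And>x. 0 \<le> b x" and K: "\<And>x y. \<Phi> x y \<le> K" "0 \<le> K"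
  obtains u where "roommate_dual_feasible \<Phi> u" "\<And>x. u x \<le> K"
    "\<And>v. roommate_dual_feasible \<Phi> v \<Longrightarrow> (\<Sum>x\<in>UNIV. b x * u x) \<le> (\<Sum>x\<in>UNIV. b x * v x)"
proof -
  define D :: "(real^'x) set" where
    "D = {v. (\<forall>x. 0 \<le> v$x \<and> v$x \<le> K) \<and> (\<forall>x y. \<Phi> x y \<le> v$x + v$y)}"
  have "D = cbox 0 (\<chi> x. K) \<inter> {v. \<forall>x y. \<Phi> x y \<le> v$x + v$y}"
    unfolding D_def by (auto simp: mem_box_cart)
  moreover have "closed {v::real^'x. \<forall>x y. \<Phi> x y \<le> v$x + v$y}"
    by (intro closed_Collect_all closed_Collect_le continuous_intros)
  ultimately have "compact D"
    by (simp add: compact_Int_closed)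
  moreover have "(\<chi> x. K) \<in> D"
    unfolding D_def using K by (auto intro: order_trans[OF K(1)])
  moreover have "continuous_on D (\<lambda>v. \<Sum>x\<in>UNIV. b x * v$x)"
    by (intro continuous_intros)
  ultimately obtain u0 where u0: "u0 \<in> D"
    and min: "\<And>w. w \<in> D \<Longrightarrow> (\<Sum>x\<in>UNIV. b x * u0$x) \<le> (\<Sum>x\<in>UNIV. b x * w$x)"
    using continuous_attains_inf[of D] by blast
  show ?thesis
  proof
    show "roommate_dual_feasible \<Phi> (\<lambda>x. u0$x)" "u0$x \<le> K" for x
      using u0 unfolding D_def roommate_dual_feasible_def by auto
  next
    fix v assume "roommate_dual_feasible \<Phi> v"
    \<comment> \<open>capping v at K keeps it dual feasible, as K bounds \<Phi>, and does not raise the cost\<close>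
    then have "(\<chi> x. min (v x) K) \<in> D"
      unfolding D_def roommate_dual_feasible_def using K
      by (auto simp: min_def intro: order_trans[OF K(1)] order_trans[OF _ add_increasing]
          order_trans[OF _ add_increasing2])
    from min[OF this] have "(\<Sum>x\<in>UNIV. b x * u0$x) \<le> (\<Sum>x\<in>UNIV. b x * min (v x) K)"
      by simp
    also have "\<dots> \<le> (\<Sum>x\<in>UNIV. b x * v x)"
      using b by (intro sum_mono mult_left_mono) auto
    finally show "(\<Sum>x\<in>UNIV. b x * u0$x) \<le> (\<Sum>x\<in>UNIV. b x * v x)" .
  qed
qed

lemma roommate_dual_feasible_perturbation:
  fixes \<Phi> :: "'x::finite \<Rightarrow> 'x \<Rightarrow> real"
  assumes u: "roommate_dual_feasible \<Phi> u"
    and zero: "\<And>x. u x = 0 \<Longrightarrow> 0 \<le> a x"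
    and tight: "\<And>x y. u x + u y = \<Phi> x y \<Longrightarrow> 0 \<le> a x + a y"
  shows "\<forall>\<^sub>F e in at_right 0. roommate_dual_feasible \<Phi> (\<lambda>x. u x + e * a x)"
proof -
  have "\<forall>\<^sub>F e in at_right 0. 0 \<le> u x + e * a x" for x
    using u zero unfolding roommate_dual_feasible_def
    by (intro eventually_nonneg_perturbation) auto
  then have "\<forall>\<^sub>F e in at_right 0. \<forall>x. 0 \<le> u x + e * a x"
    by (rule eventually_all_finite)
  moreover have "\<forall>\<^sub>F e in at_right 0. 0 \<le> (u x + u y - \<Phi> x y) + e * (a x + a y)" for x y
    using u tight unfolding roommate_dual_feasible_def
    by (intro eventually_nonneg_perturbation) auto
  then have "\<forall>\<^sub>F e in at_right 0. \<forall>x y. 0 \<le> (u x + u y - \<Phi> x y) + e * (a x + a y)"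
    by (intro eventually_all_finite)
  ultimately show ?thesis
    unfolding roommate_dual_feasible_def
    by eventually_elim (simp add: algebra_simps)
qed

(* Columns of the constraint matrix of the fractional roommate LP: a pair of types
   (two individuals of x when x = y) and a single. *)
definition roommate_column :: "('x \<times> 'x) + 'x \<Rightarrow> real^'x::finite" where
  "roommate_column = case_sum (\<lambda>(x, y). axis x 1 + axis y 1) (\<lambda>x. axis x 1)"

lemma roommate_column_nth [simp]:
  "roommate_column (Inl p) $ x = of_bool (fst p = x) + of_bool (snd p = x)"
  "roommate_column (Inr z) $ x = of_bool (z = x)"
  by (auto simp: roommate_column_def axis_def split: prod.split)

lemma roommate_column_combination:
  fixes c :: "('x::finite \<times> 'x) + 'x \<Rightarrow> real"
  shows "(\<Sum>i\<in>UNIV. c i *\<^sub>R roommate_column i) $ x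
    = (\<Sum>y\<in>UNIV. c (Inl (x, y)) + c (Inl (y, x))) + c (Inr x)"
proof -
  have "(\<Sum>i\<in>UNIV. c i *\<^sub>R roommate_column i) $ x
      = (\<Sum>y\<in>UNIV. \<Sum>z\<in>UNIV. c (Inl (y, z)) * roommate_column (Inl (y, z)) $ x)
        + (\<Sum>z\<in>UNIV. c (Inr z) * roommate_column (Inr z) $ x)"
    by (simp flip: UNIV_Plus_UNIV UNIV_Times_UNIV
        add: sum.Plus sum.cartesian_product case_prod_unfold)
  also have "\<dots> = (\<Sum>y\<in>UNIV. \<Sum>z\<in>UNIV. of_bool (y = x) * c (Inl (y, z)))
        + (\<Sum>y\<in>UNIV. \<Sum>z\<in>UNIV. of_bool (z = x) * c (Inl (y, z))) + c (Inr x)"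
    by (simp add: algebra_simps sum.distrib)
  also have "\<dots> = (\<Sum>y\<in>UNIV. c (Inl (x, y)) + c (Inl (y, x))) + c (Inr x)"
    by (simp add: sum.distrib flip: sum_distrib_left)
  finally show ?thesis .
qed

(* L x y is the mass of pairs listed as (x, y), so both L x y and L y x use type x;
   V x is the mass of singles. Complementary slackness replaces the budget identity
   of roommate_outcome. *)
definition fractional_stable_outcome ::
  "('x::finite \<Rightarrow> real) \<Rightarrow> ('x \<Rightarrow> 'x \<Rightarrow> real) \<Rightarrow> ('x \<Rightarrow> 'x \<Rightarrow> real) \<Rightarrow>
    ('x \<Rightarrow> real) \<Rightarrow> ('x \<Rightarrow> real) \<Rightarrow> bool"
  where "fractional_stable_outcome b \<Phi> L V u \<longleftrightarrow>
     (\<forall>x. b x = (\<Sum>y\<in>UNIV. L x y + L y x) + V x) \<and>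
     (\<forall>x y. 0 \<le> L x y \<and> (L x y \<noteq> 0 \<longrightarrow> u x + u y = \<Phi> x y)) \<and>
     (\<forall>x. 0 \<le> V x \<and> (V x \<noteq> 0 \<longrightarrow> u x = 0)) \<and>
     roommate_dual_feasible \<Phi> u"

definition roommate_binding_constraints ::
  "('x \<Rightarrow> 'x \<Rightarrow> real) \<Rightarrow> ('x \<Rightarrow> real) \<Rightarrow> (('x \<times> 'x) + 'x) set"
  where "roommate_binding_constraints \<Phi> u =
    Inl ` {(x, y). u x + u y = \<Phi> x y} \<union> Inr ` {x. u x = 0}"

(* No direction that keeps the binding dual constraints satisfied decreases the cost at a
   minimiser, so by Farkas' lemma b is a nonnegative combination of their columns. *)
lemma roommate_dual_minimum_binding_combination:
  fixes \<Phi> :: "'x::finite \<Rightarrow> 'x \<Rightarrow> real"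
  assumes u: "roommate_dual_feasible \<Phi> u"
    and min: "\<And>v. roommate_dual_feasible \<Phi> v \<Longrightarrow>
      (\<Sum>x\<in>UNIV. b x * u x) \<le> (\<Sum>x\<in>UNIV. b x * v x)"
  shows "\<exists>c. (\<forall>i\<in>roommate_binding_constraints \<Phi> u. 0 \<le> c i) \<and>
    (\<chi> x. b x) = (\<Sum>i\<in>roommate_binding_constraints \<Phi> u. c i *\<^sub>R roommate_column i)"
proof (rule farkas_lemma)
  fix a :: "real^'x"
  assume dual: "\<And>i. i \<in> roommate_binding_constraints \<Phi> u \<Longrightarrow> 0 \<le> inner a (roommate_column i)"
  have "0 \<le> a$x" if "u x = 0" for x
    using dual[of "Inr x"] that
    by (simp add: roommate_binding_constraints_def roommate_column_def inner_axis)
  moreover have "0 \<le> a$x + a$y" if "u x + u y = \<Phi> x y" for x y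
    using dual[of "Inl (x, y)"] that
    by (simp add: roommate_binding_constraints_def roommate_column_def inner_axis inner_add_right)
  ultimately have "\<forall>\<^sub>F e in at_right 0. roommate_dual_feasible \<Phi> (\<lambda>x. u x + e * a$x)"
    by (rule roommate_dual_feasible_perturbation[OF u])
  then have "\<forall>\<^sub>F e in at_right 0. roommate_dual_feasible \<Phi> (\<lambda>x. u x + e * a$x) \<and> 0 < e"
    using eventually_at_right_less by (rule eventually_conj)
  then obtain e where e: "roommate_dual_feasible \<Phi> (\<lambda>x. u x + e * a$x)" "0 < e"
    using eventually_happens'[OF trivial_limit_at_right_real] by blast
  from min[OF e(1)] have "0 \<le> e * (\<Sum>x\<in>UNIV. b x * a$x)"
    by (simp add: algebra_simps sum.distrib sum_distrib_left)
  with e(2) show "0 \<le> inner a (\<chi> x. b x)"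
    by (simp add: inner_vec_def zero_le_mult_iff mult.commute)
qed simp

lemma fractional_stable_outcome_exists:
  fixes \<Phi> :: "'x::finite \<Rightarrow> 'x \<Rightarrow> real"
  assumes b: "\<And>x. 0 \<le> b x" and K: "\<And>x y. \<Phi> x y \<le> K" "0 \<le> K"
  obtains L V u where "fractional_stable_outcome b \<Phi> L V u" "\<And>x. u x \<le> K"
proof -
  obtain u where u: "roommate_dual_feasible \<Phi> u" "\<And>x. u x \<le> K"
    and min: "\<And>v. roommate_dual_feasible \<Phi> v \<Longrightarrow>
      (\<Sum>x\<in>UNIV. b x * u x) \<le> (\<Sum>x\<in>UNIV. b x * v x)"
    using roommate_dual_minimum_exists[of b \<Phi> K] b K by blast
  define I where "I = roommate_binding_constraints \<Phi> u"
  obtain c where c: "\<forall>i\<in>I. 0 \<le> c i"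
    and bc: "(\<chi> x. b x) = (\<Sum>i\<in>I. c i *\<^sub>R roommate_column i)"
    using roommate_dual_minimum_binding_combination[OF u(1) min] unfolding I_def by blast
  define c' where "c' i = (if i \<in> I then c i else 0)" for i
  have "(\<Sum>i\<in>UNIV. c' i *\<^sub>R roommate_column i) = (\<Sum>i\<in>I. c i *\<^sub>R roommate_column i)"
    by (rule sum.mono_neutral_cong_right) (auto simp: c'_def)
  then have "b x = (\<Sum>i\<in>UNIV. c' i *\<^sub>R roommate_column i) $ x" for x
    by (simp flip: bc)
  then have "fractional_stable_outcome b \<Phi> (\<lambda>x y. c' (Inl (x, y))) (\<lambda>x. c' (Inr x)) u"
    unfolding fractional_stable_outcome_def roommate_column_combination
    using c u(1) by (auto simp: c'_def I_def roommate_binding_constraints_def)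
  then show ?thesis using u(2) by (rule that)
qed

definition roommate_matched :: "('x::finite \<Rightarrow> 'x \<Rightarrow> nat) \<Rightarrow> 'x \<Rightarrow> nat" where
  "roommate_matched \<mu> x = 2 * \<mu> x x + (\<Sum>y\<in>UNIV - {x}. \<mu> x y)"

lemma feasible_roommate_iff:
  "feasible_roommate m \<mu> \<longleftrightarrow> (\<forall>x y. \<mu> x y = \<mu> y x) \<and> (\<forall>x. roommate_matched \<mu> x \<le> m x)"
  by (simp add: feasible_roommate_def roommate_matched_def)

lemma roommate_surplus_eq_payoffs:
  fixes \<mu> :: "'x::finite \<Rightarrow> 'x \<Rightarrow> nat"
  assumes sym: "\<And>x y. \<mu> x y = \<mu> y x"
    and tight: "\<And>x y. \<mu> x y \<noteq> 0 \<Longrightarrow> \<Phi> x y = u x + u y"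
  shows "roommate_surplus \<mu> \<Phi> = (\<Sum>x\<in>UNIV. real (roommate_matched \<mu> x) * u x)"
proof -
  define S where "S = {(x::'x, y). x \<noteq> y}"
  have pair_payoff: "real (\<mu> x y) * \<Phi> x y = real (\<mu> x y) * u x + real (\<mu> x y) * u y" for x y
    using tight[of x y] by (cases "\<mu> x y = 0") (auto simp: distrib_left)
  have "(\<Sum>p\<in>S. real (\<mu> (fst p) (snd p)) * u (snd p)) = (\<Sum>p\<in>S. real (\<mu> (fst p) (snd p)) * u (fst p))"
    by (rule sum.reindex_bij_witness[of _ prod.swap prod.swap]) (auto simp: S_def sym)
  then have "(\<Sum>p\<in>S. real (\<mu> (fst p) (snd p)) * \<Phi> (fst p) (snd p) / 2)
      = (\<Sum>p\<in>S. real (\<mu> (fst p) (snd p)) * u (fst p))"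
    by (simp add: pair_payoff sum.distrib flip: sum_divide_distrib)
  also have "\<dots> = (\<Sum>x\<in>UNIV. \<Sum>y\<in>UNIV - {x}. real (\<mu> x y) * u x)"
  proof -
    have "S = Sigma UNIV (\<lambda>x. UNIV - {x})"
      by (auto simp: S_def)
    then show ?thesis
      by (simp add: sum.Sigma case_prod_unfold)
  qed
  finally have "(\<Sum>p\<in>S. real (\<mu> (fst p) (snd p)) * \<Phi> (fst p) (snd p) / 2)
      = (\<Sum>x\<in>UNIV. \<Sum>y\<in>UNIV - {x}. real (\<mu> x y) * u x)" .
  moreover have "(\<Sum>x\<in>UNIV. real (\<mu> x x) * \<Phi> x x) = (\<Sum>x\<in>UNIV. 2 * real (\<mu> x x) * u x)"
    by (intro sum.cong refl) (simp add: pair_payoff)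
  ultimately show ?thesis
    unfolding roommate_surplus_def roommate_matched_def S_def
    by (simp add: distrib_right sum.distrib sum_distrib_right)
qed

lemma stable_roommate_outcomeI:
  fixes \<mu> :: "'x::finite \<Rightarrow> 'x \<Rightarrow> nat"
  assumes sym: "\<And>x y. \<mu> x y = \<mu> y x"
    and tight: "\<And>x y. \<mu> x y \<noteq> 0 \<Longrightarrow> \<Phi> x y = u x + u y"
    and dual: "roommate_dual_feasible \<Phi> u"
    and matched: "\<And>x. roommate_matched \<mu> x \<le> m x"
    and unmatched: "\<And>x. u x \<noteq> 0 \<Longrightarrow> m x = roommate_matched \<mu> x"
  shows "stable_roommate_outcome m \<Phi> \<mu> u"
proof -
  have "(\<Sum>x\<in>UNIV. real (m x) * u x) = (\<Sum>x\<in>UNIV. real (roommate_matched \<mu> x) * u x)"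
    by (rule sum.cong[OF refl]) (metis mult_zero_right unmatched)
  also have "\<dots> = roommate_surplus \<mu> \<Phi>"
    using sym tight by (rule roommate_surplus_eq_payoffs[symmetric])
  finally show ?thesis
    using sym matched dual
    unfolding stable_roommate_outcome_def roommate_outcome_def feasible_roommate_iff
      roommate_dual_feasible_def
    by auto
qed

definition round_down_matching :: "('x \<Rightarrow> 'x \<Rightarrow> real) \<Rightarrow> 'x \<Rightarrow> 'x \<Rightarrow> nat" where
  "round_down_matching L x y = (if x = y then nat \<lfloor>L x x\<rfloor> else nat \<lfloor>L x y + L y x\<rfloor>)"

lemma round_down_matching_sym: "round_down_matching L x y = round_down_matching L y x"
  by (simp add: round_down_matching_def add.commute)

lemma round_down_matching_nonzero:
  "round_down_matching L x y \<noteq> 0 \<Longrightarrow> L x y \<noteq> 0 \<or> L y x \<noteq> 0"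
  by (auto simp: round_down_matching_def split: if_splits)

lemma roommate_matched_round_down:
  fixes L :: "'x::finite \<Rightarrow> 'x \<Rightarrow> real"
  assumes L: "\<And>x y. 0 \<le> L x y"
  shows "real (roommate_matched (round_down_matching L) x) \<le> (\<Sum>y\<in>UNIV. L x y + L y x)"
    and "(\<Sum>y\<in>UNIV. L x y + L y x)
      < real (roommate_matched (round_down_matching L) x) + CARD('x) + 1"
proof -
  let ?f = "\<lambda>t. real_of_int \<lfloor>t\<rfloor>"
  have "(\<Sum>y\<in>UNIV. L x y + L y x) = 2 * L x x + (\<Sum>y\<in>UNIV - {x}. L x y + L y x)"
    by (simp add: sum.remove[of UNIV x])
  moreover have "real (roommate_matched (round_down_matching L) x)
      = 2 * ?f (L x x) + (\<Sum>y\<in>UNIV - {x}. ?f (L x y + L y x))"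
    using L by (simp add: roommate_matched_def round_down_matching_def add_nonneg_nonneg)
  moreover have "(\<Sum>y\<in>UNIV - {x}. ?f (L x y + L y x)) \<le> (\<Sum>y\<in>UNIV - {x}. L x y + L y x)"
    by (intro sum_mono) simp
  moreover have "(\<Sum>y\<in>UNIV - {x}. L x y + L y x) \<le> (\<Sum>y\<in>UNIV - {x}. ?f (L x y + L y x) + 1)"
    by (intro sum_mono) linarith
  moreover have "(\<Sum>y\<in>UNIV - {x}. ?f (L x y + L y x) + 1)
      = (\<Sum>y\<in>UNIV - {x}. ?f (L x y + L y x)) + CARD('x) - 1"
    by (simp add: sum.distrib card_Diff_singleton of_nat_diff)
  moreover have "?f (L x x) \<le> L x x" "L x x < ?f (L x x) + 1"
    by linarith+
  ultimately show "real (roommate_matched (round_down_matching L) x) \<le> (\<Sum>y\<in>UNIV. L x y + L y x)"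
    and "(\<Sum>y\<in>UNIV. L x y + L y x)
      < real (roommate_matched (round_down_matching L) x) + CARD('x) + 1"
    by linarith+
qed

lemma stable_outcome_of_subpopulation:
  fixes \<Phi> :: "'x::finite \<Rightarrow> 'x \<Rightarrow> real" and n :: "'x \<Rightarrow> nat"
  assumes sym: "\<And>x y. \<Phi> x y = \<Phi> y x" and K: "\<And>x y. \<Phi> x y \<le> K" "0 \<le> K"
  shows "\<exists>m \<mu> u. (\<forall>x. m x \<le> n x) \<and> (\<forall>x. n x - m x \<le> CARD('x)) \<and> (\<forall>x. u x \<le> K)
    \<and> stable_roommate_outcome m \<Phi> \<mu> u"
proof -
  obtain L V u where "fractional_stable_outcome (\<lambda>x. real (n x)) \<Phi> L V u" and uK: "\<And>x. u x \<le> K"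
    using fractional_stable_outcome_exists[of "\<lambda>x. real (n x)" \<Phi> K] K by auto
  then have n: "\<And>x. real (n x) = (\<Sum>y\<in>UNIV. L x y + L y x) + V x"
    and L: "\<And>x y. 0 \<le> L x y" "\<And>x y. L x y \<noteq> 0 \<Longrightarrow> u x + u y = \<Phi> x y"
    and V: "\<And>x. 0 \<le> V x" "\<And>x. V x \<noteq> 0 \<Longrightarrow> u x = 0"
    and dual: "roommate_dual_feasible \<Phi> u"
    unfolding fractional_stable_outcome_def by auto
  define \<mu> where "\<mu> = round_down_matching L"
  define m where "m x = (if u x = 0 then n x else roommate_matched \<mu> x)" for x
  have matched_le: "roommate_matched \<mu> x \<le> n x" for x
    using roommate_matched_round_down(1)[of L x, OF L(1)] n[of x] V(1)[of x]
    unfolding \<mu>_def by linarith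
  have "stable_roommate_outcome m \<Phi> \<mu> u"
  proof (rule stable_roommate_outcomeI)
    show "\<mu> x y = \<mu> y x" for x y
      unfolding \<mu>_def by (rule round_down_matching_sym)
    show "\<Phi> x y = u x + u y" if "\<mu> x y \<noteq> 0" for x y
      using round_down_matching_nonzero[OF that[unfolded \<mu>_def]] L(2) sym by (metis add.commute)
    show "roommate_matched \<mu> x \<le> m x" for x
      using matched_le by (simp add: m_def)
    show "m x = roommate_matched \<mu> x" if "u x \<noteq> 0" for x
      using that by (simp add: m_def)
  qed (fact dual)
  moreover have "m x \<le> n x" for x
    using matched_le by (simp add: m_def)
  moreover have "n x - m x \<le> CARD('x)" for x
  proof (cases "u x = 0")
    case False
    \<comment> \<open>nobody of type x stays single, so only the rounding losses are removed\<close>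
    then have "V x = 0"
      using V(2) by blast
    then have "real (n x) < real (roommate_matched \<mu> x) + CARD('x) + 1"
      using roommate_matched_round_down(2)[of L x, OF L(1)] n[of x] unfolding \<mu>_def by linarith
    with False show ?thesis by (simp add: m_def)
  qed (simp add: m_def)
  ultimately show ?thesis
    using uK by blast
qed

lemma bounded_removal_negligible:
  fixes n m :: "nat \<Rightarrow> 'x::finite \<Rightarrow> nat" and u :: "nat \<Rightarrow> 'x \<Rightarrow> real"
  assumes N_inf: "filterlim (\<lambda>k. real (\<Sum>x\<in>UNIV. n k x)) at_top sequentially"
    and mn: "\<And>k x. m k x \<le> n k x" and removed: "\<And>k x. n k x - m k x \<le> R"
    and u: "\<And>k x. 0 \<le> u k x" "\<And>k x. u k x \<le> K"
  shows "(\<lambda>k. (real (\<Sum>x\<in>UNIV. n k x) - real (\<Sum>x\<in>UNIV. m k x)) / real (\<Sum>x\<in>UNIV. n k x))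
      \<longlonglongrightarrow> 0"
    and "(\<lambda>k. (\<Sum>x\<in>UNIV. real (n k x - m k x) * u k x) / real (\<Sum>x\<in>UNIV. n k x)) \<longlonglongrightarrow> 0"
proof -
  have "\<bar>\<Sum>x\<in>UNIV. real (n k x - m k x)\<bar> \<le> CARD('x) * R" for k
    using removed by (simp add: sum_nonneg sum_bounded_above)
  then have "(\<lambda>k. (\<Sum>x\<in>UNIV. real (n k x - m k x)) / real (\<Sum>x\<in>UNIV. n k x)) \<longlonglongrightarrow> 0"
    by (rule bounded_divide_tendsto_0[OF N_inf])
  moreover have "real (\<Sum>x\<in>UNIV. n k x) - real (\<Sum>x\<in>UNIV. m k x)
      = (\<Sum>x\<in>UNIV. real (n k x - m k x))" for k
    using mn by (simp add: of_nat_diff sum_subtractf)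
  ultimately show "(\<lambda>k. (real (\<Sum>x\<in>UNIV. n k x) - real (\<Sum>x\<in>UNIV. m k x))
      / real (\<Sum>x\<in>UNIV. n k x)) \<longlonglongrightarrow> 0"
    by simp
  have "\<bar>\<Sum>x\<in>UNIV. real (n k x - m k x) * u k x\<bar> \<le> CARD('x) * (R * K)" for k
    using removed u by (simp add: sum_nonneg sum_bounded_above mult_mono)
  then show "(\<lambda>k. (\<Sum>x\<in>UNIV. real (n k x - m k x) * u k x) / real (\<Sum>x\<in>UNIV. n k x))
      \<longlonglongrightarrow> 0"
    by (rule bounded_divide_tendsto_0[OF N_inf])
qed

theorem proposition3:
  fixes \<Phi> :: "'x::finite \<Rightarrow> 'x \<Rightarrow> real"
    and n :: "nat \<Rightarrow> 'x \<Rightarrow> nat"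
    and f :: "'x \<Rightarrow> real"
  assumes sym: "\<And>x y. \<Phi> x y = \<Phi> y x"
    and N_inf: "filterlim (\<lambda>k. real (\<Sum>x\<in>UNIV. n k x)) at_top sequentially"
    and freq: "\<And>x. (\<lambda>k. real (n k x) / real (\<Sum>z\<in>UNIV. n k z)) \<longlonglongrightarrow> f x"
  shows "\<exists>(m :: nat \<Rightarrow> 'x \<Rightarrow> nat) (\<mu> :: nat \<Rightarrow> 'x \<Rightarrow> 'x \<Rightarrow> nat) (u :: nat \<Rightarrow> 'x \<Rightarrow> real).
           (\<forall>k x. m k x \<le> n k x) \<and>
           (\<forall>k. stable_roommate_outcome (m k) \<Phi> (\<mu> k) (u k)) \<and>
           (\<lambda>k. (real (\<Sum>x\<in>UNIV. n k x) - real (\<Sum>x\<in>UNIV. m k x)) / real (\<Sum>x\<in>UNIV. n k x))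
              \<longlonglongrightarrow> 0 \<and>
           (\<lambda>k. (\<Sum>x\<in>UNIV. real (n k x - m k x) * u k x) / real (\<Sum>x\<in>UNIV. n k x))
              \<longlonglongrightarrow> 0"
proof -
  define K where "K = max 0 (Max (range (case_prod \<Phi>)))"
  have K: "\<Phi> x y \<le> K" "0 \<le> K" for x y
    unfolding K_def by (auto intro!: max.coboundedI2 Max_ge)
  have "\<forall>k. \<exists>m \<mu> u. (\<forall>x. m x \<le> n k x) \<and> (\<forall>x. n k x - m x \<le> CARD('x))
      \<and> (\<forall>x. u x \<le> K) \<and> stable_roommate_outcome m \<Phi> \<mu> u"
    using stable_outcome_of_subpopulation[of \<Phi> K, OF sym K] by blast
  then have "\<exists>m \<mu> u. \<forall>k. (\<forall>x. m k x \<le> n k x) \<and> (\<forall>x. n k x - m k x \<le> CARD('x))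
      \<and> (\<forall>x. u k x \<le> K) \<and> stable_roommate_outcome (m k) \<Phi> (\<mu> k) (u k)"
    by (simp only: choice_iff)
  then obtain m \<mu> u where mn: "\<And>k x. m k x \<le> n k x"
    and removed: "\<And>k x. n k x - m k x \<le> CARD('x)" and uK: "\<And>k x. u k x \<le> K"
    and stable: "\<And>k. stable_roommate_outcome (m k) \<Phi> (\<mu> k) (u k)"
    by blast
  have u_nonneg: "0 \<le> u k x" for k x
    using stable[of k] by (simp add: stable_roommate_outcome_def roommate_dual_feasible_def)
  show ?thesis
    using bounded_removal_negligible[where u = u, OF N_inf mn removed u_nonneg uK] mn stable
    by blast
qed

end
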